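(* Let $n\ge1$, $k\ge1$, let $t\neq0$, and let $a_1,\dots,a_n>0$ be pairwise distinct. Then \[ \theta_{n;k}(t)=(-1)^{n-1}\sum_{j=1}^{n}\frac{\prod_{m=1}^{n}\big(\frac{1-t}{a_j t}+\frac1{a_m}\big)}{\prod_{\ell=1,\ell\neq j}^{n}\big(\frac1{a_j}-\frac1{a_\ell}\big)}\;a_j^{k+1}\,t^{k}. \]
   Context: Let $\boldsymbol a=(a_j)_{j\ge1}$ be a sequence of positive reals. For integers $n\ge1$, $k\ge0$ let $\mathcal M_{n,k}=\{(\ell_1,\dots,\ell_k)\in\mathbb N^k: n\ge\ell_1\ge\cdots\ge\ell_k\ge1\}$. For $\vec\ell\in\mathcal M_{n,k}$ let $\sigma(\vec\ell)=|\{1\le j\le k-1:\ell_j=\ell_{j+1}\}|$ and $w(\vec\ell)=\prod_{j=1}^k a_{\ell_j}$. Define $\theta_{n;k}(t)=\sum_{\vec\ell\in\mathcal M_{n,k}}w(\vec\ell)\,t^{\sigma(\vec\ell)}$. *)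

theory Defs
  imports Complex_Main
begin

text \<open>M_{n,k}: weakly decreasing sequences (l_1,...,l_k) with n >= l_1 >= ... >= l_k >= 1,
  represented as lists of length k (0-indexed).\<close>
definition Mset :: "nat \<Rightarrow> nat \<Rightarrow> nat list set" where
  "Mset n k = {ls. length ls = k \<and> sorted_wrt (\<ge>) ls \<and> set ls \<subseteq> {1..n}}"

definition sig :: "nat list \<Rightarrow> nat" where
  "sig ls = card {j. Suc j < length ls \<and> ls ! j = ls ! Suc j}"

definition wt :: "(nat \<Rightarrow> real) \<Rightarrow> nat list \<Rightarrow> real" where
  "wt a ls = (\<Prod>i<length ls. a (ls ! i))"

definition theta :: "(nat \<Rightarrow> real) \<Rightarrow> nat \<Rightarrow> nat \<Rightarrow> real \<Rightarrow> real" where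
  "theta a n k t = (\<Sum>ls\<in>Mset n k. wt a ls * t ^ sig ls)"

end

theory Submission
  imports Defs "HOL-Computational_Algebra.Polynomial"
begin

text \<open>Splitting off the first (largest) entry of a sequence gives a recurrence for theta in
  n and k. The closed form is (-1)^(n-1) times a divided difference at the nodes 1/a_j, and the
  basic recurrence of divided differences shows that it satisfies the same recurrence. Both sides
  vanish for n = 0 and equal a_1 + ... + a_n for k = 1. For the closed form the latter needs its
  value at k = 0, a divided difference of P(x)/x with P of degree n; it is computed from the
  divided differences of 1/x and of polynomials of degree < n.\<close>

definition divdiff :: "('a \<Rightarrow> 'b::field) \<Rightarrow> 'a set \<Rightarrow> ('a \<Rightarrow> 'b) \<Rightarrow> 'b" where
  "divdiff x S g = (\<Sum>j\<in>S. g j / (\<Prod>l\<in>S - {j}. x j - x l))"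

lemma divdiff_add: "divdiff x S (\<lambda>j. f j + g j) = divdiff x S f + divdiff x S g"
  by (simp add: divdiff_def add_divide_distrib sum.distrib)

lemma divdiff_cmult: "divdiff x S (\<lambda>j. c * g j) = c * divdiff x S g"
  by (simp add: divdiff_def sum_distrib_left)

lemma divdiff_neg: "divdiff x S (\<lambda>j. - f j) = - divdiff x S f"
  by (simp add: divdiff_def sum_negf)

lemma divdiff_diff: "divdiff x S (\<lambda>j. f j - g j) = divdiff x S f - divdiff x S g"
  by (simp add: divdiff_def diff_divide_distrib sum_subtractf)

lemma divdiff_cong: "(\<And>j. j \<in> S \<Longrightarrow> f j = g j) \<Longrightarrow> divdiff x S f = divdiff x S g"
  by (simp add: divdiff_def)

lemma divdiff_empty [simp]: "divdiff x {} g = 0"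
  by (simp add: divdiff_def)

lemma divdiff_singleton [simp]: "divdiff x {u} g = g u"
  by (simp add: divdiff_def)

lemma divdiff_remove_node:
  assumes "finite S" "u \<in> S" "inj_on x S"
  shows "divdiff x S (\<lambda>j. g j * (x j - x u)) = divdiff x (S - {u}) g"
proof -
  have "divdiff x S (\<lambda>j. g j * (x j - x u)) = (\<Sum>j\<in>S - {u}. g j * (x j - x u) / (\<Prod>l\<in>S - {j}. x j - x l))"
    using assms by (simp add: divdiff_def sum.remove)
  also have "\<dots> = divdiff x (S - {u}) g"
    unfolding divdiff_def
  proof (rule sum.cong)
    fix j assume j: "j \<in> S - {u}"
    have "S - {j} = insert u (S - {u} - {j})" using assms j by auto
    moreover have "x j - x u \<noteq> 0" using assms j by (auto dest: inj_onD)
    ultimately show "g j * (x j - x u) / (\<Prod>l\<in>S - {j}. x j - x l) = g j / (\<Prod>l\<in>S - {u} - {j}. x j - x l)"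
      using assms(1) by simp
  qed simp
  finally show ?thesis .
qed

lemma divdiff_recurrence:
  assumes "finite S" "inj_on x S" "u \<in> S" "v \<in> S"
  shows "(x v - x u) * divdiff x S g = divdiff x (S - {u}) g - divdiff x (S - {v}) g"
proof -
  have "(x v - x u) * divdiff x S g
      = divdiff x S (\<lambda>j. g j * (x j - x u)) - divdiff x S (\<lambda>j. g j * (x j - x v))"
    by (simp add: divdiff_def sum_distrib_left sum_subtractf[symmetric] diff_divide_distrib algebra_simps)
  thus ?thesis
    using divdiff_remove_node[OF assms(1,3,2), of g] divdiff_remove_node[OF assms(1,4,2), of g] by simp
qed

lemma divdiff_poly:
  fixes x :: "'a \<Rightarrow> 'b::field"
  assumes "finite S" "inj_on x S" "card S = Suc d" "degree p \<le> d"
  shows "divdiff x S (\<lambda>j. poly p (x j)) = coeff p d"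
  using assms
proof (induction d arbitrary: S p)
  case 0
  then obtain u where "S = {u}" by (auto simp: card_Suc_eq)
  moreover obtain c where "p = [:c:]" using 0 degree0_coeffs[of p] by auto
  ultimately show ?case by simp
next
  case (Suc d)
  then obtain u T where "S = insert u T" "u \<notin> T" "card T = Suc d"
    using card_Suc_eq[of S "Suc d"] by blast
  moreover from this obtain v where "v \<in> T" by fastforce
  ultimately have uv: "u \<in> S" "v \<in> S" "u \<noteq> v" by auto
  have smaller: "finite (S - {w})" "inj_on x (S - {w})" "card (S - {w}) = Suc d" if "w \<in> S" for w
    using Suc.prems that by (auto intro: inj_on_subset)
  \<comment> \<open>both smaller divided differences of the constant 1 equal \<open>coeff 1 d\<close>\<close>
  have "(x v - x u) * divdiff x S (\<lambda>_. 1) = 0"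
    using divdiff_recurrence[OF Suc.prems(1,2) uv(1,2)] Suc.IH[OF smaller[OF uv(1)], of 1]
      Suc.IH[OF smaller[OF uv(2)], of 1] by simp
  hence const: "divdiff x S (\<lambda>_. 1) = 0"
    using uv Suc.prems(2) by (auto dest: inj_onD)
  let ?q = "synthetic_div p (x u)"
  define r where "r = poly p (x u)"
  have split: "poly p (x j) = poly ?q (x j) * (x j - x u) + r * 1" for j
  proof -
    have "poly p (x j) = poly ([:-x u, 1:] * ?q + [:r:]) (x j)"
      unfolding r_def by (simp only: synthetic_div_correct')
    thus ?thesis by (simp add: algebra_simps)
  qed
  have deg_q: "degree ?q \<le> d" using Suc.prems(4) by (simp add: degree_synthetic_div)
  have "coeff p (Suc d) = coeff ?q d"
    using arg_cong[OF synthetic_div_correct'[of "x u" p], of "\<lambda>p. coeff p (Suc d)"] deg_q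
    by (simp add: coeff_eq_0)
  moreover have "divdiff x S (\<lambda>j. poly p (x j)) = divdiff x (S - {u}) (\<lambda>j. poly ?q (x j))"
    unfolding split divdiff_add divdiff_cmult const
    using divdiff_remove_node[OF Suc.prems(1) uv(1) Suc.prems(2)] by simp
  ultimately show ?case using Suc.IH[OF smaller[OF uv(1)] deg_q] by simp
qed

lemma divdiff_inverse:
  fixes x :: "'a \<Rightarrow> 'b::field"
  assumes "finite S" "S \<noteq> {}" "inj_on x S" "0 \<notin> x ` S"
  shows "divdiff x S (\<lambda>j. 1 / x j) = (-1) ^ (card S - 1) / (\<Prod>j\<in>S. x j)"
  using assms
proof (induction S rule: finite_ne_induct)
  case (insert u F)
  let ?S = "insert u F"
  have "card ?S = Suc (card F)" "card F \<noteq> 0" using insert by auto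
  hence "divdiff x ?S (\<lambda>j. poly 1 (x j)) = 0"
    using divdiff_poly[OF _ insert.prems(1), of "card F" 1] insert.hyps(1) by simp
  hence const: "divdiff x ?S (\<lambda>_. 1) = 0" by simp
  have "divdiff x ?S (\<lambda>j. 1 / x j)
      = divdiff x ?S (\<lambda>j. 1 / x u * 1 + - (1 / x u) * (1 / x j * (x j - x u)))"
  proof (rule divdiff_cong)
    fix j assume "j \<in> ?S"
    hence "x j \<noteq> 0" "x u \<noteq> 0" using insert.prems(2) by auto
    thus "1 / x j = 1 / x u * 1 + - (1 / x u) * (1 / x j * (x j - x u))" by (simp add: field_simps)
  qed
  also have "\<dots> = 1 / x u * divdiff x ?S (\<lambda>_. 1) + - (1 / x u) * divdiff x ?S (\<lambda>j. 1 / x j * (x j - x u))"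
    by (simp only: divdiff_add divdiff_cmult)
  also have "\<dots> = - (1 / x u) * divdiff x F (\<lambda>j. 1 / x j)"
    using divdiff_remove_node[OF _ insertI1 insert.prems(1), of "\<lambda>j. 1 / x j"] insert.hyps
    by (simp add: const)
  also have "\<dots> = (-1) ^ (card ?S - 1) / (\<Prod>j\<in>?S. x j)"
    using insert \<open>card F \<noteq> 0\<close> by (cases "card F") (auto intro: inj_on_subset)
  finally show ?case .
qed simp

lemma degree_prod_linear_le:
  assumes "finite M"
  shows "degree (\<Prod>m\<in>M. [:y m, c:]) \<le> card M"
proof -
  have "degree (\<Prod>m\<in>M. [:y m, c:]) \<le> (\<Sum>m\<in>M. degree [:y m, c:])"
    using degree_prod_sum_le[OF assms, of "\<lambda>m. [:y m, c:]"] by (simp only: comp_def)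
  also have "\<dots> \<le> (\<Sum>m\<in>M. 1)"
    using degree_pCons_le[of "y _" "[:c:]"] by (intro sum_mono) simp
  finally show ?thesis by simp
qed

lemma coeff_prod_linear:
  assumes "finite M"
  shows "coeff (\<Prod>m\<in>M. [:y m, c:]) (card M) = c ^ card M"
  using assms
proof (induction M rule: finite_induct)
  case (insert u F)
  have "coeff (\<Prod>m\<in>F. [:y m, c:]) (Suc (card F)) = 0"
    using degree_prod_linear_le[OF insert.hyps(1), of y c] by (simp add: coeff_eq_0)
  thus ?case using insert by simp
qed simp

lemma divdiff_prod_linear_div_node:
  fixes x :: "'a \<Rightarrow> 'b::field"
  assumes "finite S" "S \<noteq> {}" "inj_on x S" "0 \<notin> x ` S" "finite M" "card M = card S"
  shows "divdiff x S (\<lambda>j. (\<Prod>m\<in>M. c * x j + y m) / x j)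
    = (-1) ^ (card S - 1) * (\<Prod>m\<in>M. y m) / (\<Prod>j\<in>S. x j) + c ^ card S"
proof -
  define P where "P = (\<Prod>m\<in>M. [:y m, c:])"
  obtain a q where P: "P = pCons a q" by (rule pCons_cases)
  obtain d where d: "card S = Suc d" using assms(1,2) by (cases "card S") auto
  have poly_P: "poly P z = (\<Prod>m\<in>M. c * z + y m)" for z
    unfolding P_def poly_prod by (simp add: algebra_simps)
  have a: "a = (\<Prod>m\<in>M. y m)" using poly_P[of 0] P by simp
  have "degree P \<le> Suc d" using degree_prod_linear_le[OF assms(5)] assms(6) d by (simp add: P_def)
  hence deg_q: "degree q \<le> d" using P by (auto simp: degree_pCons_eq_if split: if_splits)
  have coeff_q: "coeff q d = c ^ card S"
    using coeff_prod_linear[OF assms(5), of y c] assms(6) d P by (simp add: P_def)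
  have "divdiff x S (\<lambda>j. (\<Prod>m\<in>M. c * x j + y m) / x j) = divdiff x S (\<lambda>j. a * (1 / x j) + poly q (x j))"
  proof (rule divdiff_cong)
    fix j assume "j \<in> S"
    hence "x j \<noteq> 0" using assms(4) by auto
    thus "(\<Prod>m\<in>M. c * x j + y m) / x j = a * (1 / x j) + poly q (x j)"
      unfolding poly_P[symmetric] P by (simp add: field_simps)
  qed
  also have "\<dots> = (-1) ^ (card S - 1) * (\<Prod>m\<in>M. y m) / (\<Prod>j\<in>S. x j) + c ^ card S"
    unfolding divdiff_add divdiff_cmult divdiff_inverse[OF assms(1-4)] divdiff_poly[OF assms(1,3) d deg_q]
    using coeff_q a by simp
  finally show ?thesis .
qed

lemma Mset_0 [simp]: "Mset n 0 = {[]}"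
  by (auto simp: Mset_def)

lemma Mset_0_Suc [simp]: "Mset 0 (Suc k) = {}"
  by (auto simp: Mset_def)

lemma finite_Mset: "finite (Mset n k)"
proof (rule finite_subset)
  show "Mset n k \<subseteq> {xs. set xs \<subseteq> {1..n} \<and> length xs = k}" by (auto simp: Mset_def)
qed (simp add: finite_lists_length_eq)

lemma Mset_mono: "Mset n k \<subseteq> Mset (Suc n) k"
  by (auto simp: Mset_def)

lemma Mset_Suc_diff: "Mset (Suc n) k - Mset n k = {xs \<in> Mset (Suc n) k. xs \<noteq> [] \<and> hd xs = Suc n}"
proof (intro set_eqI iffI)
  fix xs assume xs: "xs \<in> Mset (Suc n) k - Mset n k"
  then obtain l where l: "l \<in> set xs" "l = Suc n"
    by (auto simp: Mset_def subset_iff) (metis atLeastAtMost_iff le_Suc_eq)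
  then obtain y ys where xs_eq: "xs = y # ys" by (cases xs) auto
  have "l \<le> y" "y \<le> Suc n" using xs l xs_eq by (auto simp: Mset_def)
  thus "xs \<in> {xs \<in> Mset (Suc n) k. xs \<noteq> [] \<and> hd xs = Suc n}" using xs l xs_eq by auto
qed (auto simp: Mset_def neq_Nil_conv)

lemma Mset_Suc_Cons: "Mset (Suc n) (Suc k) - Mset n (Suc k) = Cons (Suc n) ` Mset (Suc n) k"
  unfolding Mset_Suc_diff by (auto simp: Mset_def length_Suc_conv subset_iff)

lemma sig_Cons: "sig (l # xs) = sig xs + (if xs \<noteq> [] \<and> hd xs = l then 1 else 0)"
proof -
  let ?A = "{j. Suc j < length xs \<and> xs ! j = xs ! Suc j}"
  have "{j. Suc j < length (l # xs) \<and> (l # xs) ! j = (l # xs) ! Suc j}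
      = (if xs \<noteq> [] \<and> hd xs = l then {0} else {}) \<union> Suc ` ?A"
  proof (intro set_eqI iffI)
    fix j assume "j \<in> {j. Suc j < length (l # xs) \<and> (l # xs) ! j = (l # xs) ! Suc j}"
    thus "j \<in> (if xs \<noteq> [] \<and> hd xs = l then {0} else {}) \<union> Suc ` ?A"
      by (cases j) (auto simp: hd_conv_nth)
  qed (auto simp: hd_conv_nth split: if_splits)
  moreover have "finite ?A" by (rule finite_subset[of _ "{..<length xs}"]) auto
  hence "card ((if xs \<noteq> [] \<and> hd xs = l then {0} else {}) \<union> Suc ` ?A)
      = card (if xs \<noteq> [] \<and> hd xs = l then {0::nat} else {}) + card (Suc ` ?A)"
    by (intro card_Un_disjoint) auto
  ultimately show ?thesis unfolding sig_def by (simp add: card_image)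
qed

lemma wt_Cons: "wt a (l # xs) = a l * wt a xs"
  unfolding wt_def length_Cons prod.lessThan_Suc_shift by simp

lemma theta_0 [simp]: "theta a n 0 t = 1"
  by (simp add: theta_def sig_def wt_def)

lemma theta_0_Suc [simp]: "theta a 0 (Suc k) t = 0"
  by (simp add: theta_def)

text \<open>The sequences of length k + 1 that use the value n + 1 start with it; removing that first
  entry contributes the factor a (n + 1), times t exactly when the remaining sequence starts
  with n + 1 as well.\<close>

lemma theta_Suc_Suc:
  "theta a (Suc n) (Suc k) t = theta a n (Suc k) t + a (Suc n) * (t * theta a (Suc n) k t + (1 - t) * theta a n k t)"
proof -
  let ?f = "\<lambda>xs. wt a xs * t ^ sig xs"
  have sum_Suc: "(\<Sum>xs\<in>Mset (Suc n) i. g xs) = (\<Sum>xs\<in>Mset n i. g xs) + (\<Sum>xs\<in>Mset (Suc n) i - Mset n i. g xs)"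
    for i and g :: "nat list \<Rightarrow> real"
    by (subst sum.subset_diff[OF Mset_mono finite_Mset]) (rule add.commute)
  have "theta a (Suc n) (Suc k) t = theta a n (Suc k) t + (\<Sum>ys\<in>Mset (Suc n) k. ?f (Suc n # ys))"
    unfolding theta_def sum_Suc[where i="Suc k"] Mset_Suc_Cons by (simp add: sum.reindex)
  also have "(\<Sum>ys\<in>Mset (Suc n) k. ?f (Suc n # ys))
      = a (Suc n) * ((\<Sum>ys\<in>Mset n k. ?f ys) + t * (\<Sum>ys\<in>Mset (Suc n) k - Mset n k. ?f ys))"
  proof -
    have low: "?f (Suc n # ys) = a (Suc n) * ?f ys" if "ys \<in> Mset n k" for ys
      using that by (cases ys) (auto simp: Mset_def wt_Cons sig_Cons)
    have high: "?f (Suc n # ys) = a (Suc n) * (t * ?f ys)" if "ys \<in> Mset (Suc n) k - Mset n k" for ys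
      using that unfolding Mset_Suc_diff by (simp add: wt_Cons sig_Cons)
    show ?thesis
      unfolding sum_Suc[where i=k] distrib_left sum_distrib_left
      by (intro arg_cong2[where f="(+)"] sum.cong refl) (simp_all add: low high)
  qed
  also have "(\<Sum>ys\<in>Mset (Suc n) k - Mset n k. ?f ys) = theta a (Suc n) k t - theta a n k t"
    unfolding theta_def sum_Suc[where i=k] by simp
  finally show ?thesis by (simp add: theta_def algebra_simps)
qed

definition theta_closed_form :: "(nat \<Rightarrow> real) \<Rightarrow> nat \<Rightarrow> nat \<Rightarrow> real \<Rightarrow> real" where
  "theta_closed_form a n k t = (-1) ^ (n - 1) * (\<Sum>j=1..n.
       (\<Prod>m=1..n. (1 - t) / (a j * t) + 1 / a m)
       / (\<Prod>l\<in>{1..n} - {j}. 1 / a j - 1 / a l)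
       * a j ^ (k + 1) * t ^ k)"

lemma theta_closed_form_divdiff:
  "theta_closed_form a n k t = (-1) ^ (n - 1) * divdiff (\<lambda>j. 1 / a j) {1..n}
     (\<lambda>j. (\<Prod>m=1..n. (1 - t) / t * (1 / a j) + 1 / a m) * a j ^ (k + 1) * t ^ k)"
  unfolding theta_closed_form_def divdiff_def by (simp add: mult.commute)

lemma inj_on_inverse_nodes: "inj_on a S \<Longrightarrow> inj_on (\<lambda>j. 1 / a j :: real) S"
  by (auto simp: inj_on_def)

text \<open>This differs from theta a n 0 t = 1, so the closed form agrees with theta only for k \<ge> 1.\<close>

lemma theta_closed_form_0:
  assumes "\<And>j. j \<in> {1..n} \<Longrightarrow> a j \<noteq> 0" "inj_on a {1..n}"
  shows "theta_closed_form a n 0 t = 1 - (- ((1 - t) / t)) ^ n"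
proof (cases n)
  case (Suc m)
  define x where "x = (\<lambda>j. 1 / a j)"
  define c where "c = (1 - t) / t"
  have nodes: "inj_on x {1..n}" "0 \<notin> x ` {1..n}"
    using assms inj_on_inverse_nodes unfolding x_def by auto
  have "theta_closed_form a n 0 t
      = (-1) ^ m * divdiff x {1..n} (\<lambda>j. (\<Prod>m=1..n. c * x j + x m) * a j ^ (0 + 1) * t ^ 0)"
    unfolding theta_closed_form_divdiff x_def c_def Suc diff_Suc_1 ..
  also have "divdiff x {1..n} (\<lambda>j. (\<Prod>m=1..n. c * x j + x m) * a j ^ (0 + 1) * t ^ 0)
      = divdiff x {1..n} (\<lambda>j. (\<Prod>m=1..n. c * x j + x m) / x j)"
    by (rule divdiff_cong) (simp add: x_def)
  also have "\<dots> = (-1) ^ m + c ^ n"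
    using divdiff_prod_linear_div_node[OF _ _ nodes, of "{1..n}" c x] Suc nodes(2)
    by (auto simp: prod_zero_iff)
  also have "(-1) ^ m * ((-1) ^ m + c ^ n) = 1 - (- c) ^ n"
  proof -
    have "(-1::real) ^ m * (-1) ^ m = 1" by (simp flip: power_mult_distrib)
    moreover have "(- c) ^ n = - ((-1) ^ m * c ^ n)" unfolding power_minus[of c] Suc by simp
    ultimately show ?thesis by (simp add: distrib_left)
  qed
  finally show ?thesis unfolding c_def .
qed (simp add: theta_closed_form_def)

lemma theta_closed_form_Suc_Suc:
  assumes "t \<noteq> 0" "\<And>j. j \<in> {1..Suc n} \<Longrightarrow> a j \<noteq> 0" "inj_on a {1..Suc n}"
  shows "theta_closed_form a (Suc n) (Suc k) t = theta_closed_form a n (Suc k) t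
           + a (Suc n) * (t * theta_closed_form a (Suc n) k t + (1 - t) * theta_closed_form a n k t)"
proof -
  define x where "x = (\<lambda>j. 1 / a j)"
  define c where "c = (1 - t) / t"
  define g where "g = (\<lambda>N k j. (\<Prod>m=1..N. c * x j + x m) * a j ^ (k + 1) * t ^ k)"
  let ?u = "Suc n"
  let ?D = "\<lambda>N k. divdiff x {1..N} (g N k)"
  have cf: "theta_closed_form a N k t = (-1) ^ (N - 1) * ?D N k" for N k
    unfolding theta_closed_form_divdiff g_def x_def c_def ..
  have g_Suc: "g N (Suc k) j = a j * t * g N k j" for N k j
    by (simp add: g_def)
  have au: "a ?u \<noteq> 0" using assms(2) by simp
  have "?D ?u (Suc k) - a ?u * t * ?D ?u k
      = divdiff x {1..?u} (\<lambda>j. (- (a j * a ?u) * t * g ?u k j) * (x j - x ?u))"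
    unfolding divdiff_cmult[symmetric] divdiff_diff[symmetric]
  proof (rule divdiff_cong)
    fix j assume "j \<in> {1..?u}"
    hence "a j \<noteq> 0" using assms(2) by simp
    thus "g ?u (Suc k) j - a ?u * t * g ?u k j = - (a j * a ?u) * t * g ?u k j * (x j - x ?u)"
      using au unfolding g_Suc x_def by (simp add: field_simps)
  qed
  also have "\<dots> = divdiff x {1..n} (\<lambda>j. (- (a j * a ?u) * t * g ?u k j))"
  proof -
    have "{1..?u} - {?u} = {1..n}" by auto
    moreover have "inj_on x {1..?u}" using inj_on_inverse_nodes[OF assms(3)] by (simp add: x_def)
    ultimately show ?thesis
      using divdiff_remove_node[of "{1..?u}" ?u x "\<lambda>j. - (a j * a ?u) * t * g ?u k j"] by simp
  qed
  also have "\<dots> = - (?D n (Suc k) + a ?u * (1 - t) * ?D n k)"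
    unfolding divdiff_cmult[symmetric] divdiff_add[symmetric] divdiff_neg[symmetric]
  proof (rule divdiff_cong)
    fix j assume "j \<in> {1..n}"
    hence "a j \<noteq> 0" using assms(2) by simp
    moreover have "g ?u k j = (c * x j + x ?u) * g n k j" by (simp add: g_def)
    ultimately show "- (a j * a ?u) * t * g ?u k j = - (g n (Suc k) j + a ?u * (1 - t) * g n k j)"
      using au assms(1) unfolding g_Suc x_def c_def by (simp add: field_simps)
  qed
  finally have rec: "?D ?u (Suc k) - a ?u * t * ?D ?u k = - (?D n (Suc k) + a ?u * (1 - t) * ?D n k)" .
  show ?thesis
  proof (cases n)
    case 0
    thus ?thesis using rec unfolding cf by (simp add: algebra_simps)
  next
    case (Suc m)
    thus ?thesis using arg_cong[OF rec, of "\<lambda>z. (-1) ^ m * z"] unfolding cf by (simp add: algebra_simps)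
  qed
qed

lemma theta_1: "theta a n 1 t = (\<Sum>l=1..n. a l)"
  by (induction n) (simp_all add: theta_Suc_Suc[where k=0, simplified])

lemma theta_closed_form_1:
  assumes "t \<noteq> 0" "\<And>j. j \<in> {1..n} \<Longrightarrow> a j \<noteq> 0" "inj_on a {1..n}"
  shows "theta_closed_form a n 1 t = (\<Sum>l=1..n. a l)"
  using assms(2,3)
proof (induction n)
  case 0
  then show ?case by (simp add: theta_closed_form_def)
next
  case (Suc n)
  have sub: "inj_on a {1..n}" "\<And>j. j \<in> {1..n} \<Longrightarrow> a j \<noteq> 0"
    using Suc.prems by (auto intro: inj_on_subset)
  define c where "c = (1 - t) / t"
  have "t * (1 - (- c) ^ Suc n) + (1 - t) * (1 - (- c) ^ n) = 1"
    using assms(1) by (simp add: c_def field_simps)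
  hence "t * theta_closed_form a (Suc n) 0 t + (1 - t) * theta_closed_form a n 0 t = 1"
    using theta_closed_form_0[OF Suc.prems(1,2)] theta_closed_form_0[OF sub(2,1)]
    by (simp add: c_def)
  thus ?case
    using theta_closed_form_Suc_Suc[OF assms(1) Suc.prems(1,2), where k=0] Suc.IH[OF sub(2,1)] by simp
qed

lemma recurrence_solutions_eq:
  fixes f g :: "nat \<Rightarrow> nat \<Rightarrow> real"
  assumes f_rec: "\<And>n k. n < N \<Longrightarrow>
      f (Suc n) (Suc (Suc k)) = f n (Suc (Suc k)) + b (Suc n) * (t * f (Suc n) (Suc k) + (1 - t) * f n (Suc k))"
    and g_rec: "\<And>n k. n < N \<Longrightarrow>
      g (Suc n) (Suc (Suc k)) = g n (Suc (Suc k)) + b (Suc n) * (t * g (Suc n) (Suc k) + (1 - t) * g n (Suc k))"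
    and "\<And>k. f 0 (Suc k) = g 0 (Suc k)"
    and "\<And>n. n \<le> N \<Longrightarrow> f n 1 = g n 1"
    and "n \<le> N"
  shows "f n (Suc k) = g n (Suc k)"
  using assms(5)
proof (induction n arbitrary: k)
  case 0
  then show ?case using assms(3) by simp
next
  case (Suc n)
  then show ?case
  proof (induction k)
    case 0
    then show ?case using assms(4) by simp
  next
    case (Suc k)
    then show ?case using f_rec[of n k] g_rec[of n k] by simp
  qed
qed

theorem mainTheorem5:
  fixes a :: "nat \<Rightarrow> real" and n k :: nat and t :: real
  assumes "n \<ge> 1" and "k \<ge> 1" and "t \<noteq> 0"
    and "\<And>j. j \<ge> 1 \<Longrightarrow> a j > 0"
    and "inj_on a {1..n}"
  shows "theta a n k t =
    (-1) ^ (n - 1) * (\<Sum>j=1..n.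
       (\<Prod>m=1..n. (1 - t) / (a j * t) + 1 / a m)
       / (\<Prod>l\<in>{1..n} - {j}. 1 / a j - 1 / a l)
       * a j ^ (k + 1) * t ^ k)"
proof -
  have nonzero: "a j \<noteq> 0" if "j \<in> {1..m}" for j m
    using assms(4) that by force
  have inj: "inj_on a {1..m}" if "m \<le> n" for m
    using assms(5) by (rule inj_on_subset) (use that in auto)
  obtain k' where k: "k = Suc k'" using assms(2) by (cases k) auto
  have "theta a n (Suc k') t = theta_closed_form a n (Suc k') t"
  proof (rule recurrence_solutions_eq[where N = n])
    show "theta_closed_form a (Suc m) (Suc (Suc k)) t = theta_closed_form a m (Suc (Suc k)) t
      + a (Suc m) * (t * theta_closed_form a (Suc m) (Suc k) t + (1 - t) * theta_closed_form a m (Suc k) t)"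
      if "m < n" for m k
      using theta_closed_form_Suc_Suc[OF assms(3) nonzero[of _ "Suc m"] inj[of "Suc m"]] that by simp
    show "theta a m 1 t = theta_closed_form a m 1 t" if "m \<le> n" for m
      using theta_1 theta_closed_form_1[OF assms(3) nonzero[of _ m] inj[OF that]] by simp
  qed (simp_all add: theta_Suc_Suc theta_closed_form_def)
  thus ?thesis unfolding k theta_closed_form_def .
qed

end
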